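(* Fix a class $c$. Let $D_c$ (positive samples) and $D_{\lnot c}$ (negative samples) be probability distributions on an input space, let $P(c),P(\lnot c)>0$ be the prior probabilities of label $c$ and of "not $c$", and set $\alpha_c=\frac{P(\lnot c)}{P(c)}$. Let $s_c$ be a score function with values in $[0,1]$, and let $r_c(t)=P_{x\sim D_c}(s_c(x)>t)$ be the recall, assumed (standing assumption) to be a strictly decreasing bijection from $[0,1]$ onto $[0,1]$, with inverse $r_c^{-1}$. Define the probabilistic average precision $$ap_c=\int_0^1 \frac{\beta}{\beta+\alpha_c\, P_{x'\sim D_{\lnot c}}\big(s_c(x')>r_c^{-1}(\beta)\big)}\,d\beta,$$ the detection error $\mathcal{L}^{\mathrm{Det}}_c=1-ap_c$, and the pairwise ranking error $R_c=P_{(x,x')\sim D_c\times D_{\lnot c}}\big(s_c(x)<s_c(x')\big)$ (with $x,x'$ independent). Then $$\alpha_c\log\left(\frac{1+\alpha_c}{1+\alpha_c-R_c}\right)\le \mathcal{L}^{\mathrm{Det}}_c\le \min\left(\sqrt{\tfrac{2}{3}\alpha_c R_c},\ 1-\frac{8}{9}\cdot\frac{1}{1+2\alpha_c R_c}\right).$$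
   Context: This is a probabilistic model of object detection for a single class $c$: $D_c$ is the distribution of candidate detections that are true objects of class $c$, $D_{\lnot c}$ the distribution of candidates that are not, and $s_c(x)$ is the detector's confidence score for class $c$. $\log$ is the natural logarithm. *)

theory Defs
  imports "HOL-Probability.Probability"
begin

definition recall :: "'a measure \<Rightarrow> ('a \<Rightarrow> real) \<Rightarrow> real \<Rightarrow> real" where
  "recall Dc s t = prob_space.prob Dc {x \<in> space Dc. s x > t}"

definition ap :: "'a measure \<Rightarrow> 'a measure \<Rightarrow> real \<Rightarrow> ('a \<Rightarrow> real) \<Rightarrow> real" where
  "ap Dc Dnc \<alpha> s =
     (LBINT \<beta>:{0..1}.
        \<beta> / (\<beta> + \<alpha> * prob_space.prob Dnc
                 {x' \<in> space Dnc. s x' > the_inv_into {0..1} (recall Dc s) \<beta>}))"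

definition det_error :: "'a measure \<Rightarrow> 'a measure \<Rightarrow> real \<Rightarrow> ('a \<Rightarrow> real) \<Rightarrow> real" where
  "det_error Dc Dnc \<alpha> s = 1 - ap Dc Dnc \<alpha> s"

definition ranking_error :: "'a measure \<Rightarrow> 'a measure \<Rightarrow> ('a \<Rightarrow> real) \<Rightarrow> real" where
  "ranking_error Dc Dnc s =
     measure (Dc \<Otimes>\<^sub>M Dnc) {p \<in> space (Dc \<Otimes>\<^sub>M Dnc). s (fst p) < s (snd p)}"

end

theory Submission
  imports Defs
begin

(*
  Write r for the recall and Q(b) = P_{x' ~ D_{not c}}(r(s x') < b) for the fraction of negatives
  scoring above the threshold r^{-1}(b). Then ap = int_0^1 b / (b + alpha Q(b)) db and, since a
  surjective recall leaves the score no atoms under D_c, Fubini gives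
  R = E_{x'}[1 - r(s x')] = int_0^1 Q(b) db. Only the profile Q, with 0 <= Q <= 1 and integral R,
  matters, and each bound is a pointwise inequality in b integrated over [0,1]:
  - 1 - b/(b + alpha Q) >= Q alpha/(b + alpha); as alpha/(b + alpha) decreases in b, the integral
    of the right-hand side is smallest when Q is the indicator of [1 - R, 1] (bathtub principle);
  - 1 - b/(b + alpha Q) - l alpha Q <= (1 - sqrt (l b))_+^2 for every l > 0, which integrates to
    1/(6 l); optimising over l gives sqrt (2 alpha R / 3);
  - AM-GM: sqrt b <= (m b/(b + alpha Q) + (b + alpha Q)/m) / 2; integrating with the optimal
    weight m = 3 (1 + 2 alpha R) / 4 gives ap >= 8 / (9 (1 + 2 alpha R)).
*)

section \<open>Integrals over intervals\<close>

lemma set_integrable_bounded_Icc: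
  fixes f :: "real \<Rightarrow> real"
  assumes "f \<in> borel_measurable borel" and "\<And>x. x \<in> {a..b} \<Longrightarrow> \<bar>f x\<bar> \<le> C"
  shows "set_integrable lborel {a..b} f"
  by (rule set_integrable_bound[OF borel_integrable_atLeastAtMost'[of a b "\<lambda>_. C"]])
     (use assms in \<open>auto simp: set_borel_measurable_def intro!: AE_I2 order_trans[OF _ abs_ge_self]\<close>)

lemma set_integrable_const: "set_integrable lborel {a..b::real} (\<lambda>_. c :: real)"
  by (rule set_integrable_bounded_Icc[where C="\<bar>c\<bar>"]) auto

lemma set_integral_Icc_FTC_interior:
  fixes f F :: "real \<Rightarrow> real"
  assumes "a \<le> b" and "continuous_on {a..b} f" and "continuous_on {a..b} F"
    and "\<And>x. a < x \<Longrightarrow> x < b \<Longrightarrow> (F has_real_derivative f x) (at x)"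
  shows "(LBINT x:{a..b}. f x) = F b - F a"
proof -
  have "(f has_integral (F b - F a)) {a..b}"
    using fundamental_theorem_of_calculus_interior[OF assms(1,3), of f] assms(4)
    by (simp add: has_real_derivative_iff_has_vector_derivative[symmetric])
  then show ?thesis
    using set_borel_integral_eq_integral(2)[OF borel_integrable_atLeastAtMost'[OF assms(2)]]
    by (simp add: integral_unique)
qed

lemma set_integral_Icc_const: "a \<le> b \<Longrightarrow> (LBINT x:{a..b}. (c::real)) = (b - a) * c"
  by (simp add: set_integral_const)

lemma set_integral_0_Icc_id: "0 \<le> c \<Longrightarrow> (LBINT x:{0..c}. x) = (c::real)^2 / 2"
  by (rule set_integral_Icc_FTC_interior[where F="\<lambda>x. x^2 / 2", THEN trans])
     (auto intro!: continuous_intros derivative_eq_intros)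

lemma set_integral_0_Icc_sqrt: "0 \<le> c \<Longrightarrow> (LBINT x:{0..c}. sqrt x) = 2/3 * c * sqrt c"
  by (rule set_integral_Icc_FTC_interior[where F="\<lambda>x. 2/3 * x * sqrt x", THEN trans])
     (auto intro!: continuous_intros derivative_eq_intros simp: field_simps)

lemma set_integral_Icc_inverse_shift:
  fixes a b c :: real
  assumes "a \<le> b" and "0 < a + c"
  shows "(LBINT x:{a..b}. 1 / (x + c)) = ln (b + c) - ln (a + c)"
  by (rule set_integral_Icc_FTC_interior[where F="\<lambda>x. ln (x + c)"])
     (use assms in \<open>auto intro!: continuous_intros derivative_eq_intros simp: field_simps\<close>)

lemma set_integral_unit_interval_bounds:
  fixes f :: "real \<Rightarrow> real"
  assumes "f \<in> borel_measurable borel" and "\<And>b. b \<in> {0..1} \<Longrightarrow> 0 \<le> f b \<and> f b \<le> 1"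
  shows "0 \<le> (LBINT b:{0..1}. f b) \<and> (LBINT b:{0..1}. f b) \<le> 1"
proof -
  have int_f: "set_integrable lborel {0..1} f"
    by (rule set_integrable_bounded_Icc[where C=1]) (use assms in auto)
  show ?thesis
    using set_integral_mono[OF int_f set_integrable_const, of 1]
      set_integral_mono[OF set_integrable_const int_f, of 0] assms(2)
    by (simp add: set_integral_Icc_const)
qed

lemma set_integral_sqrt_deficit_squared:
  assumes "l > 0"
  shows "(LBINT x:{0..1/l}. (1 - sqrt (l * x))^2) = 1 / (6 * l)"
proof -
  have expand: "(1 - sqrt (l * x))^2 = 1 - 2 * sqrt l * sqrt x + l * x" if "0 \<le> x" for x
    using that assms by (simp add: power2_diff real_sqrt_mult power_mult_distrib)
  have "(LBINT x:{0..1/l}. (1 - sqrt (l * x))^2) = (LBINT x:{0..1/l}. 1 - 2 * sqrt l * sqrt x + l * x)"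
    by (rule set_lebesgue_integral_cong) (auto simp: expand)
  also have "\<dots> = 1/l - 2 * sqrt l * (2/3 * (1/l) * sqrt (1/l)) + l * ((1/l)^2 / 2)"
    using assms
    by (simp add: set_integral_add set_integral_diff borel_integrable_atLeastAtMost' continuous_intros
        set_integral_Icc_const set_integral_0_Icc_id set_integral_0_Icc_sqrt)
  also have "\<dots> = 1 / (6 * l)"
    using assms by (simp add: real_sqrt_divide field_simps power2_eq_square)
  finally show ?thesis .
qed

lemma set_integral_truncated_sqrt_deficit:
  fixes l :: real
  assumes "l > 0"
  shows "set_integrable lborel {0..1} (\<lambda>b. indicator {0..1/l} b * (1 - sqrt (l * b))^2)"
    and "(LBINT b:{0..1}. indicator {0..1/l} b * (1 - sqrt (l * b))^2) \<le> 1 / (6 * l)"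
proof -
  define H where "H b = (1 - sqrt (l * b))^2" for b
  have H_range: "0 \<le> H b \<and> H b \<le> 1" if "0 \<le> b" "b \<le> 1/l" for b
  proof -
    have "l * b \<le> 1"
      using that assms by (simp add: field_simps)
    then show ?thesis
      using that assms unfolding H_def by (simp add: abs_le_iff power_le_one)
  qed
  have int_H: "set_integrable lborel {0..1} (\<lambda>b. indicator {0..1/l} b * H b)"
    by (rule set_integrable_bounded_Icc[where C=1]) (auto simp: H_def indicator_def dest: H_range)
  then show "set_integrable lborel {0..1} (\<lambda>b. indicator {0..1/l} b * (1 - sqrt (l * b))^2)"
    unfolding H_def .
  have "(LBINT b:{0..1}. indicator {0..1/l} b * H b) \<le> (LBINT b:{0..1/l}. H b)"
    unfolding set_lebesgue_integral_def
  proof (rule integral_mono)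
    show "integrable lborel (\<lambda>b. indicator {0..1} b *\<^sub>R (indicator {0..1/l} b * H b))"
      using int_H unfolding set_integrable_def .
    have "continuous_on {0..1/l} H"
      unfolding H_def by (intro continuous_intros)
    then show "integrable lborel (\<lambda>b. indicator {0..1/l} b *\<^sub>R H b)"
      using borel_integrable_atLeastAtMost' unfolding set_integrable_def by blast
    show "indicator {0..1} b *\<^sub>R (indicator {0..1/l} b * H b) \<le> indicator {0..1/l} b *\<^sub>R H b" for b
      by (auto simp: indicator_def H_def)
  qed
  also have "\<dots> = 1 / (6 * l)"
    unfolding H_def using assms by (rule set_integral_sqrt_deficit_squared)
  finally show "(LBINT b:{0..1}. indicator {0..1/l} b * (1 - sqrt (l * b))^2) \<le> 1 / (6 * l)"
    unfolding H_def .
qed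

section \<open>Pointwise inequalities\<close>

lemma weighted_le_imprecision:
  fixes b q \<alpha> :: real
  assumes "0 \<le> b" and "0 \<le> q" and "q \<le> 1" and "\<alpha> > 0"
  shows "q * (\<alpha> / (b + \<alpha>)) \<le> 1 - b / (b + \<alpha> * q)"
proof (cases "b = 0")
  case False
  then have pos: "0 < b + \<alpha> * q" using assms by (intro add_pos_nonneg) auto
  have "q * (\<alpha> / (b + \<alpha>)) \<le> \<alpha> * q / (b + \<alpha> * q)"
    using assms pos by (simp add: frac_le mult.commute)
  also have "\<dots> = 1 - b / (b + \<alpha> * q)"
    using pos by (simp add: field_simps)
  finally show ?thesis .
qed (use assms in simp)

lemma imprecision_minus_linear_le:
  fixes b h l :: real
  assumes "0 \<le> b" and "0 \<le> h" and "l > 0"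
  shows "1 - b / (b + h) - l * h \<le> indicator {0..1/l} b * (1 - sqrt (l * b))^2"
proof -
  consider "b = 0" | "0 < b" "1 < l * b" | "0 < b" "l * b \<le> 1"
    using assms by fastforce
  then show ?thesis
  proof cases
    case 1
    then show ?thesis using assms by (simp add: indicator_def)
  next
    case 2
    have "1 - b / (b + h) = h / (b + h)"
      using 2 assms by (simp add: field_simps)
    also have "\<dots> \<le> h / b"
      using 2 assms by (simp add: frac_le)
    also have "\<dots> \<le> l * h"
      using 2 assms mult_left_mono[of 1 "l * b" h] by (simp add: divide_le_eq algebra_simps)
    finally show ?thesis
      using 2 assms by (simp add: indicator_def field_simps)
  next
    case 3
    define t where "t = sqrt (l * b)"
    have t2: "t^2 = l * b"
      unfolding t_def using assms by simp
    \<comment> \<open>cleared of denominators, the claim becomes a perfect square\<close>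
    have "b * ((1 - t)^2 * (b + h) - (h - l * h * (b + h)))
        = ((1 - t) * b - t * h)^2 + (l * b - t^2) * h * (b + h)"
      by algebra
    then have "0 \<le> b * ((1 - t)^2 * (b + h) - (h - l * h * (b + h)))"
      using t2 by simp
    then have "h - l * h * (b + h) \<le> (1 - t)^2 * (b + h)"
      using 3 by (simp add: zero_le_mult_iff)
    then have "1 - b / (b + h) - l * h \<le> (1 - t)^2"
      using 3 assms by (simp add: field_simps)
    then show ?thesis
      using 3 assms by (simp add: indicator_def t_def field_simps)
  qed
qed

lemma sqrt_le_weighted_precision:
  fixes b h m :: real
  assumes "0 \<le> b" and "0 \<le> h" and "m > 0"
  shows "sqrt b \<le> m / 2 * (b / (b + h)) + (b + h) / (2 * m)"
proof -
  have "b / (b + h) * (b + h) = b"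
    using assms by (cases "b + h = 0") auto
  then have "sqrt b = sqrt (m * (b / (b + h)) * ((b + h) / m))"
    using assms by (simp add: ac_simps)
  also have "\<dots> \<le> (m * (b / (b + h)) + (b + h) / m) / 2"
    using assms by (intro arith_geo_mean_sqrt) (simp_all del: times_divide_eq_right)
  also have "\<dots> = m / 2 * (b / (b + h)) + (b + h) / (2 * m)"
    by (simp add: add_divide_distrib mult.commute)
  finally show ?thesis .
qed

lemma le_sqrt_if_le_linear_plus_inverse:
  fixes x y :: real
  assumes "0 \<le> x" and bound: "\<And>l. l > 0 \<Longrightarrow> y \<le> l * x + 1 / (6 * l)"
  shows "y \<le> sqrt (2/3 * x)"
proof (cases "x = 0")
  case True
  have "y \<le> 0"
  proof (rule ccontr)
    assume "\<not> y \<le> 0"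
    then show False using bound[of "1 / y"] True by simp
  qed
  then show ?thesis using True by simp
next
  case False
  define S where "S = sqrt (2/3 * x)"
  have "S > 0" and "x = 3/2 * S^2"
    unfolding S_def using assms False by simp_all
  then have "1 / (3 * S) * x + 1 / (6 * (1 / (3 * S))) = S"
    by (simp add: field_simps power2_eq_square)
  then show ?thesis
    using bound[of "1 / (3 * S)"] \<open>S > 0\<close> unfolding S_def by simp
qed

text \<open>Bathtub principle: among profiles 0 \<le> Q \<le> 1 on [0,1] with a given integral, the indicator
  of the right end [a,1] minimises the integral against a decreasing weight w. Pointwise, the gap
  is controlled by the value of w at the threshold a.\<close>
lemma bathtub_pointwise:
  fixes w :: "real \<Rightarrow> real" and a b q :: real
  assumes antitone: "\<And>x y. 0 \<le> x \<Longrightarrow> x \<le> y \<Longrightarrow> y \<le> 1 \<Longrightarrow> w y \<le> w x"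
    and "0 \<le> a" "a \<le> 1" and "b \<in> {0..1}" and "0 \<le> q \<and> q \<le> 1"
  shows "indicator {a..1} b * w b \<le> q * w b + (indicator {a..1} b - q) * w a"
proof (cases "a \<le> b")
  case True
  then have "(1 - q) * w b \<le> (1 - q) * w a"
    using antitone[of a b] assms by (intro mult_left_mono) auto
  then show ?thesis using True assms by (simp add: algebra_simps)
next
  case False
  then have "q * w a \<le> q * w b"
    using antitone[of b a] assms by (intro mult_left_mono) auto
  then show ?thesis using False assms by (simp add: algebra_simps)
qed

lemma bathtub_lower_bound:
  fixes w Q :: "real \<Rightarrow> real"
  assumes [measurable]: "w \<in> borel_measurable borel" "Q \<in> borel_measurable borel"
    and antitone: "\<And>x y. 0 \<le> x \<Longrightarrow> x \<le> y \<Longrightarrow> y \<le> 1 \<Longrightarrow> w y \<le> w x"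
    and Q_range: "\<And>b. b \<in> {0..1} \<Longrightarrow> 0 \<le> Q b \<and> Q b \<le> 1"
  shows "(LBINT b:{1 - (LBINT b:{0..1}. Q b)..1}. w b) \<le> (LBINT b:{0..1}. Q b * w b)"
proof -
  define a where "a = 1 - (LBINT b:{0..1}. Q b)"
  have w_bound: "\<bar>w b\<bar> \<le> \<bar>w 0\<bar> + \<bar>w 1\<bar>" if "b \<in> {0..1}" for b
    using antitone[of 0 b] antitone[of b 1] that by auto
  have int_Qw: "set_integrable lborel {0..1} (\<lambda>b. Q b * w b)"
  proof (rule set_integrable_bounded_Icc)
    fix b :: real assume b: "b \<in> {0..1}"
    show "\<bar>Q b * w b\<bar> \<le> \<bar>w 0\<bar> + \<bar>w 1\<bar>"
      using mult_mono[of "\<bar>Q b\<bar>" 1 "\<bar>w b\<bar>"] Q_range[OF b] w_bound[OF b] by (simp add: abs_mult)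
  qed simp
  have int_Q: "set_integrable lborel {0..1} Q"
    by (rule set_integrable_bounded_Icc[where C=1]) (use Q_range in auto)
  have int_indicator: "set_integrable lborel {0..1} (indicator {a..1} :: real \<Rightarrow> real)"
    by (rule set_integrable_bounded_Icc[where C=1]) (auto simp: indicator_def)
  have int_indicator_w: "set_integrable lborel {0..1} (\<lambda>b. indicator {a..1} b * w b)"
    by (rule set_integrable_bounded_Icc[where C="\<bar>w 0\<bar> + \<bar>w 1\<bar>"]) (auto simp: indicator_def w_bound)
  have a_range: "0 \<le> a" "a \<le> 1"
    using set_integral_unit_interval_bounds[of Q] Q_range unfolding a_def by auto
  have restrict: "(LBINT b:{0..1}. indicator {a..1} b * f b) = (LBINT b:{a..1}. f b)" for f :: "real \<Rightarrow> real"
    unfolding set_lebesgue_integral_def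
    by (rule Bochner_Integration.integral_cong) (use a_range in \<open>auto simp: indicator_def\<close>)
  have "(LBINT b:{a..1}. w b) = (LBINT b:{0..1}. indicator {a..1} b * w b)"
    by (rule restrict[symmetric])
  also have "\<dots> \<le> (LBINT b:{0..1}. Q b * w b + (indicator {a..1} b - Q b) * w a)"
    using bathtub_pointwise[of w a _ "Q _", OF antitone a_range _ Q_range]
      int_indicator_w int_Qw int_Q int_indicator
    by (intro set_integral_mono set_integral_add(1) set_integrable_mult_left set_integral_diff(1))
  also have "\<dots> = (LBINT b:{0..1}. Q b * w b) + ((LBINT b:{0..1}. indicator {a..1} b) - (LBINT b:{0..1}. Q b)) * w a"
    using int_Qw int_Q int_indicator by (simp add: set_integral_add set_integral_diff)
  also have "(LBINT b:{0..1}. indicator {a..1} b) = (LBINT b:{a..1}. 1::real)"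
    using restrict[of "\<lambda>_. 1"] by simp
  finally show ?thesis
    using a_range by (simp add: set_integral_Icc_const a_def)
qed

section \<open>The three bounds for a precision profile\<close>

context
  fixes \<alpha> :: real and Q :: "real \<Rightarrow> real"
  assumes alpha_pos: "\<alpha> > 0"
    and Q_measurable [measurable]: "Q \<in> borel_measurable borel"
    and Q_range: "\<And>b. b \<in> {0..1} \<Longrightarrow> 0 \<le> Q b \<and> Q b \<le> 1"
begin

lemma set_integrable_Q: "set_integrable lborel {0..1} Q"
  by (rule set_integrable_bounded_Icc[where C=1]) (use Q_range in auto)

lemma set_integral_Q_bounds: "0 \<le> (LBINT b:{0..1}. Q b)" "(LBINT b:{0..1}. Q b) \<le> 1"
  using set_integral_unit_interval_bounds[OF Q_measurable Q_range] by auto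

lemma precision_range: "b \<in> {0..1} \<Longrightarrow> 0 \<le> b / (b + \<alpha> * Q b) \<and> b / (b + \<alpha> * Q b) \<le> 1"
proof -
  assume "b \<in> {0..1}"
  then have "0 \<le> b" and "0 \<le> \<alpha> * Q b"
    using Q_range[of b] alpha_pos by simp_all
  then show ?thesis
    by (cases "b + \<alpha> * Q b = 0") (simp_all add: divide_le_eq_1)
qed

lemma set_integrable_precision: "set_integrable lborel {0..1} (\<lambda>b. b / (b + \<alpha> * Q b))"
proof (rule set_integrable_bounded_Icc[where C=1])
  show "(\<lambda>b. b / (b + \<alpha> * Q b)) \<in> borel_measurable borel"
    by measurable
  show "\<bar>b / (b + \<alpha> * Q b)\<bar> \<le> 1" if "b \<in> {0..1}" for b
    using precision_range[OF that] by linarith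
qed

lemma ln_bound_le_imprecision:
  "\<alpha> * ln ((1 + \<alpha>) / (1 + \<alpha> - (LBINT b:{0..1}. Q b)))
    \<le> 1 - (LBINT b:{0..1}. b / (b + \<alpha> * Q b))"
proof -
  define R where "R = (LBINT b:{0..1}. Q b)"
  define w where "w b = \<alpha> / (b + \<alpha>)" for b
  have R: "0 \<le> R" "R \<le> 1"
    unfolding R_def by (fact set_integral_Q_bounds)+
  have w_range: "0 \<le> w b \<and> w b \<le> 1" if "0 \<le> b" for b
    using that alpha_pos by (simp add: w_def)
  have "\<alpha> * ln ((1 + \<alpha>) / (1 + \<alpha> - R)) = \<alpha> * (LBINT b:{1 - R..1}. 1 / (b + \<alpha>))"
    using R alpha_pos by (simp add: set_integral_Icc_inverse_shift ln_div)
  also have "\<dots> = (LBINT b:{1 - R..1}. w b)"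
    using set_integral_mult_right[where a=\<alpha> and M=lborel and A="{1 - R..1}" and f="\<lambda>b. 1 / (b + \<alpha>)"]
    by (simp add: w_def)
  also have "\<dots> \<le> (LBINT b:{0..1}. Q b * w b)"
    unfolding R_def
  proof (rule bathtub_lower_bound[OF _ Q_measurable _ Q_range])
    show "w \<in> borel_measurable borel"
      unfolding w_def by measurable
    show "w y \<le> w x" if "0 \<le> x" "x \<le> y" for x y
      unfolding w_def using that alpha_pos by (intro frac_le) auto
  qed
  also have "\<dots> \<le> (LBINT b:{0..1}. 1 - b / (b + \<alpha> * Q b))"
  proof (rule set_integral_mono)
    show "set_integrable lborel {0..1} (\<lambda>b. Q b * w b)"
    proof (rule set_integrable_bounded_Icc[where C=1])
      show "(\<lambda>b. Q b * w b) \<in> borel_measurable borel"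
        unfolding w_def by measurable
      show "\<bar>Q b * w b\<bar> \<le> 1" if "b \<in> {0..1}" for b
        using Q_range[OF that] w_range[of b] that by (simp add: abs_mult mult_le_one)
    qed
    show "set_integrable lborel {0..1} (\<lambda>b. 1 - b / (b + \<alpha> * Q b))"
      by (intro set_integral_diff(1) set_integrable_const set_integrable_precision)
    show "Q b * w b \<le> 1 - b / (b + \<alpha> * Q b)" if "b \<in> {0..1}" for b
      using Q_range[OF that] alpha_pos that weighted_le_imprecision unfolding w_def by simp
  qed
  also have "\<dots> = 1 - (LBINT b:{0..1}. b / (b + \<alpha> * Q b))"
    by (simp add: set_integral_diff(2)[OF set_integrable_const set_integrable_precision]
        set_integral_Icc_const)
  finally show ?thesis
    unfolding R_def .
qed

lemma imprecision_le_linear_plus_inverse: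
  assumes "l > 0"
  shows "1 - (LBINT b:{0..1}. b / (b + \<alpha> * Q b)) \<le> l * (\<alpha> * (LBINT b:{0..1}. Q b)) + 1 / (6 * l)"
proof -
  have int_imprecision: "set_integrable lborel {0..1} (\<lambda>b. 1 - b / (b + \<alpha> * Q b))"
    by (intro set_integral_diff(1) set_integrable_const set_integrable_precision)
  have int_linear: "set_integrable lborel {0..1} (\<lambda>b. l * (\<alpha> * Q b))"
    by (intro set_integrable_mult_right set_integrable_Q)
  have "1 - (LBINT b:{0..1}. b / (b + \<alpha> * Q b)) - l * (\<alpha> * (LBINT b:{0..1}. Q b))
      = (LBINT b:{0..1}. 1 - b / (b + \<alpha> * Q b)) - (LBINT b:{0..1}. l * (\<alpha> * Q b))"
    by (simp add: set_integral_diff(2)[OF set_integrable_const set_integrable_precision]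
        set_integral_Icc_const)
  also have "\<dots> = (LBINT b:{0..1}. 1 - b / (b + \<alpha> * Q b) - l * (\<alpha> * Q b))"
    by (rule set_integral_diff(2)[OF int_imprecision int_linear, symmetric])
  also have "\<dots> \<le> (LBINT b:{0..1}. indicator {0..1/l} b * (1 - sqrt (l * b))^2)"
  proof (rule set_integral_mono)
    show "set_integrable lborel {0..1} (\<lambda>b. 1 - b / (b + \<alpha> * Q b) - l * (\<alpha> * Q b))"
      by (intro set_integral_diff(1) int_imprecision int_linear)
    show "set_integrable lborel {0..1} (\<lambda>b. indicator {0..1/l} b * (1 - sqrt (l * b))^2)"
      using assms by (rule set_integral_truncated_sqrt_deficit)
    show "1 - b / (b + \<alpha> * Q b) - l * (\<alpha> * Q b) \<le> indicator {0..1/l} b * (1 - sqrt (l * b))^2"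
      if "b \<in> {0..1}" for b
      using imprecision_minus_linear_le[of b "\<alpha> * Q b" l] Q_range[OF that] alpha_pos assms that
      by simp
  qed
  also have "\<dots> \<le> 1 / (6 * l)"
    using assms by (rule set_integral_truncated_sqrt_deficit)
  finally show ?thesis
    by simp
qed

lemma imprecision_le_sqrt_bound:
  "1 - (LBINT b:{0..1}. b / (b + \<alpha> * Q b)) \<le> sqrt (2/3 * \<alpha> * (LBINT b:{0..1}. Q b))"
  using le_sqrt_if_le_linear_plus_inverse[OF _ imprecision_le_linear_plus_inverse] alpha_pos set_integral_Q_bounds
  by (simp add: mult.assoc)

lemma imprecision_le_reciprocal_bound:
  "1 - (LBINT b:{0..1}. b / (b + \<alpha> * Q b)) \<le> 1 - 8/9 * (1 / (1 + 2 * \<alpha> * (LBINT b:{0..1}. Q b)))"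
proof -
  define R where "R = (LBINT b:{0..1}. Q b)"
  define A where "A = (LBINT b:{0..1}. b / (b + \<alpha> * Q b))"
  define m where "m = 3 * (1 + 2 * \<alpha> * R) / 4"
  have "0 \<le> \<alpha> * R"
    unfolding R_def using alpha_pos set_integral_Q_bounds by simp
  then have m_pos: "m > 0"
    unfolding m_def by simp
  have "2/3 = (LBINT b:{0..1}. sqrt b)"
    by (simp add: set_integral_0_Icc_sqrt)
  also have "\<dots> \<le> (LBINT b:{0..1}. m / 2 * (b / (b + \<alpha> * Q b)) + 1 / (2 * m) * b + \<alpha> / (2 * m) * Q b)"
  proof (rule set_integral_mono)
    show "set_integrable lborel {0..1::real} sqrt"
      by (rule set_integrable_bounded_Icc[where C=1]) auto
    show "set_integrable lborel {0..1}
        (\<lambda>b. m / 2 * (b / (b + \<alpha> * Q b)) + 1 / (2 * m) * b + \<alpha> / (2 * m) * Q b)"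
      by (intro set_integral_add(1) set_integrable_mult_right set_integrable_precision set_integrable_Q)
        (rule set_integrable_bounded_Icc[where C=1], auto)
    show "sqrt b \<le> m / 2 * (b / (b + \<alpha> * Q b)) + 1 / (2 * m) * b + \<alpha> / (2 * m) * Q b"
      if "b \<in> {0..1}" for b
      using sqrt_le_weighted_precision[of b "\<alpha> * Q b" m] Q_range[OF that] alpha_pos m_pos that
      by (simp add: add_divide_distrib)
  qed
  also have "\<dots> = m / 2 * A + 1 / (2 * m) * (1/2) + \<alpha> / (2 * m) * R"
  proof -
    have int_id: "set_integrable lborel {0..1::real} (\<lambda>b. b)"
      by (rule set_integrable_bounded_Icc[where C=1]) auto
    have int_1: "set_integrable lborel {0..1} (\<lambda>b. m / 2 * (b / (b + \<alpha> * Q b)))"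
      and int_2: "set_integrable lborel {0..1::real} (\<lambda>b. 1 / (2 * m) * b)"
      and int_3: "set_integrable lborel {0..1} (\<lambda>b. \<alpha> / (2 * m) * Q b)"
      by (intro set_integrable_mult_right set_integrable_precision int_id set_integrable_Q)+
    show ?thesis
      unfolding set_integral_add(2)[OF set_integral_add(1)[OF int_1 int_2] int_3]
        set_integral_add(2)[OF int_1 int_2] set_integral_mult_right
      by (simp add: set_integral_0_Icc_id A_def R_def)
  qed
  also have "\<dots> = m / 2 * A + (1 + 2 * \<alpha> * R) / (4 * m)"
    using m_pos by (simp add: field_simps)
  also have "(1 + 2 * \<alpha> * R) / (4 * m) = 1/3"
    using \<open>0 \<le> \<alpha> * R\<close> by (simp add: m_def)
  finally have "2 / (3 * m) \<le> A"
    using m_pos by (simp add: field_simps)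
  moreover have "2 / (3 * m) = 8/9 * (1 / (1 + 2 * \<alpha> * R))"
    using \<open>0 \<le> \<alpha> * R\<close> by (simp add: m_def field_simps)
  ultimately show ?thesis
    unfolding A_def R_def by simp
qed

end

section \<open>Recall, ranking error and average precision\<close>

lemma recall_antimono:
  assumes "prob_space M" and [measurable]: "s \<in> borel_measurable M" and "t1 \<le> t2"
  shows "recall M s t2 \<le> recall M s t1"
proof -
  interpret prob_space M by fact
  show ?thesis
    unfolding recall_def using assms(3) by (intro finite_measure_mono) auto
qed

lemma recall_range: "prob_space M \<Longrightarrow> 0 \<le> recall M s t \<and> recall M s t \<le> 1"
  unfolding recall_def by (simp add: prob_space.prob_le_1)

lemma borel_measurable_recall:
  assumes "prob_space M" and "s \<in> borel_measurable M"
  shows "recall M s \<in> borel_measurable borel"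
proof -
  have "mono (\<lambda>t. - recall M s t)"
    using recall_antimono[OF assms] by (simp add: mono_def)
  then show ?thesis
    using borel_measurable_uminus[OF borel_measurable_mono] by fastforce
qed

text \<open>An atom of the score at t would make the recall jump at t, leaving a gap in its range.\<close>
lemma prob_ge_eq_recall:
  assumes "prob_space M" and [measurable]: "s \<in> borel_measurable M"
    and range: "{0..1} \<subseteq> range (recall M s)"
  shows "measure M {x \<in> space M. t \<le> s x} = recall M s t"
proof -
  interpret prob_space M by fact
  define p where "p = measure M {x \<in> space M. t \<le> s x}"
  have "recall M s t \<le> p"
    unfolding recall_def p_def by (intro finite_measure_mono) auto
  moreover have "\<not> recall M s t < p"
  proof
    assume less: "recall M s t < p"
    have "p \<le> 1"
      unfolding p_def by (rule prob_le_1)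
    then have "(recall M s t + p) / 2 \<in> {0..1}"
      using less recall_range[OF prob_space_axioms, of s t] by auto
    with range obtain u where u: "recall M s u = (recall M s t + p) / 2"
      by (metis rangeE subsetD)
    show False
    proof (cases "u < t")
      case True
      then have "p \<le> recall M s u"
        unfolding recall_def p_def by (intro finite_measure_mono) auto
      then show False using u less by simp
    next
      case False
      then have "recall M s u \<le> recall M s t"
        by (intro recall_antimono) (auto simp: prob_space_axioms)
      then show False using u less by simp
    qed
  qed
  ultimately show ?thesis
    unfolding p_def by simp
qed

lemma prob_less_eq_one_minus_recall:
  assumes "prob_space M" and [measurable]: "s \<in> borel_measurable M"
    and "{0..1} \<subseteq> range (recall M s)"
  shows "measure M {x \<in> space M. s x < t} = 1 - recall M s t"
proof -
  have "{x \<in> space M. s x < t} = space M - {x \<in> space M. t \<le> s x}"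
    by auto
  then show ?thesis
    using prob_space.prob_compl[OF assms(1), of "{x \<in> space M. t \<le> s x}"] prob_ge_eq_recall[OF assms]
    by simp
qed

lemma ranking_error_eq_integral:
  assumes "prob_space Dc" and "prob_space Dnc" and "sets Dnc = sets Dc"
    and [measurable]: "s \<in> borel_measurable Dc" and "{0..1} \<subseteq> range (recall Dc s)"
  shows "ranking_error Dc Dnc s = (\<integral>y. 1 - recall Dc s (s y) \<partial>Dnc)"
proof -
  interpret Dc: prob_space Dc by fact
  interpret Dnc: prob_space Dnc by fact
  interpret pair_sigma_finite Dc Dnc
    by (simp add: pair_sigma_finite_def Dc.sigma_finite_measure_axioms Dnc.sigma_finite_measure_axioms)
  have [measurable]: "s \<in> borel_measurable Dnc"
    using assms(4) unfolding measurable_cong_sets[OF assms(3) refl] .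
  have [measurable]: "recall Dc s \<in> borel_measurable borel"
    using borel_measurable_recall assms by blast
  define E where "E = {p \<in> space (Dc \<Otimes>\<^sub>M Dnc). s (fst p) < s (snd p)}"
  have "emeasure (Dc \<Otimes>\<^sub>M Dnc) E = (\<integral>\<^sup>+y. emeasure Dc ((\<lambda>x. (x, y)) -` E) \<partial>Dnc)"
    by (rule emeasure_pair_measure_alt2) (simp add: E_def)
  also have "\<dots> = (\<integral>\<^sup>+y. ennreal (1 - recall Dc s (s y)) \<partial>Dnc)"
  proof (rule nn_integral_cong)
    fix y assume "y \<in> space Dnc"
    then have "(\<lambda>x. (x, y)) -` E = {x \<in> space Dc. s x < s y}"
      by (auto simp: E_def space_pair_measure)
    then show "emeasure Dc ((\<lambda>x. (x, y)) -` E) = ennreal (1 - recall Dc s (s y))"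
      using prob_less_eq_one_minus_recall[OF assms(1,4,5)] by (simp add: Dc.emeasure_eq_measure)
  qed
  finally show ?thesis
    unfolding ranking_error_def E_def[symmetric] measure_def
    by (simp add: integral_eq_nn_integral recall_range[OF assms(1)])
qed

lemma borel_measurable_prob_less:
  fixes Y :: "'a \<Rightarrow> real"
  assumes "prob_space N" and [measurable]: "Y \<in> borel_measurable N"
  shows "(\<lambda>b. measure N {y \<in> space N. Y y < b}) \<in> borel_measurable borel"
proof (rule borel_measurable_mono)
  interpret prob_space N by fact
  show "mono (\<lambda>b. measure N {y \<in> space N. Y y < b})"
    unfolding mono_def by (auto intro!: finite_measure_mono)
qed

lemma set_integral_prob_less_eq_integral:
  fixes Y :: "'a \<Rightarrow> real"
  assumes "prob_space N" and [measurable]: "Y \<in> borel_measurable N"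
    and Y_range: "\<And>y. y \<in> space N \<Longrightarrow> 0 \<le> Y y \<and> Y y \<le> 1"
  shows "(LBINT b:{0..1}. measure N {y \<in> space N. Y y < b}) = (\<integral>y. 1 - Y y \<partial>N)"
proof -
  interpret N: prob_space N by fact
  interpret pair_sigma_finite N lborel
    by (simp add: pair_sigma_finite_def N.sigma_finite_measure_axioms lborel.sigma_finite_measure_axioms)
  define Q where "Q b = measure N {y \<in> space N. Y y < b}" for b
  have [measurable]: "Q \<in> borel_measurable borel"
    unfolding Q_def using assms(1,2) by (rule borel_measurable_prob_less)
  define f where "f y b = ennreal (indicator {0..1} b * (if Y y < b then 1 else 0))" for y and b :: real
  have [measurable]: "case_prod f \<in> borel_measurable (N \<Otimes>\<^sub>M lborel)"
    unfolding f_def by measurable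
  have "(\<integral>\<^sup>+b. ennreal (indicator {0..1} b * Q b) \<partial>lborel)
      = (\<integral>\<^sup>+b. (\<integral>\<^sup>+y. f y b \<partial>N) \<partial>lborel)"
  proof (rule nn_integral_cong)
    fix b :: real
    have "(\<integral>\<^sup>+y. f y b \<partial>N)
        = (\<integral>\<^sup>+y. ennreal (indicator {0..1} b) * indicator {y \<in> space N. Y y < b} y \<partial>N)"
      by (rule nn_integral_cong) (auto simp: f_def indicator_def)
    also have "\<dots> = ennreal (indicator {0..1} b) * emeasure N {y \<in> space N. Y y < b}"
      by (rule nn_integral_cmult_indicator) measurable
    also have "\<dots> = ennreal (indicator {0..1} b * Q b)"
      by (simp add: Q_def N.emeasure_eq_measure ennreal_mult)
    finally show "ennreal (indicator {0..1} b * Q b) = (\<integral>\<^sup>+y. f y b \<partial>N)" ..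
  qed
  also have "\<dots> = (\<integral>\<^sup>+y. (\<integral>\<^sup>+b. f y b \<partial>lborel) \<partial>N)"
    by (rule Fubini') measurable
  also have "\<dots> = (\<integral>\<^sup>+y. ennreal (1 - Y y) \<partial>N)"
  proof (rule nn_integral_cong)
    fix y assume "y \<in> space N"
    then have "(\<integral>\<^sup>+b. f y b \<partial>lborel) = (\<integral>\<^sup>+b. indicator {Y y<..1} b \<partial>lborel)"
      using Y_range[of y] by (intro nn_integral_cong) (auto simp: f_def indicator_def)
    also have "\<dots> = ennreal (1 - Y y)"
      using Y_range \<open>y \<in> space N\<close> by simp
    finally show "(\<integral>\<^sup>+b. f y b \<partial>lborel) = ennreal (1 - Y y)" .
  qed
  finally have nn_eq: "(\<integral>\<^sup>+b. ennreal (indicator {0..1} b * Q b) \<partial>lborel)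
      = (\<integral>\<^sup>+y. ennreal (1 - Y y) \<partial>N)" .
  have "(LBINT b:{0..1}. Q b) = enn2real (\<integral>\<^sup>+b. ennreal (indicator {0..1} b * Q b) \<partial>lborel)"
    unfolding set_lebesgue_integral_def real_scaleR_def by (intro integral_eq_nn_integral) (auto simp: Q_def)
  also have "\<dots> = (\<integral>y. 1 - Y y \<partial>N)"
    unfolding nn_eq using Y_range by (intro integral_eq_nn_integral[symmetric]) auto
  finally show ?thesis
    unfolding Q_def .
qed

lemma ap_eq_set_integral_recall_less:
  assumes bij: "bij_betw (recall Dc s) {0..1} {0..1}"
    and strict: "\<And>t1 t2. 0 \<le> t1 \<Longrightarrow> t1 < t2 \<Longrightarrow> t2 \<le> 1 \<Longrightarrow> recall Dc s t2 < recall Dc s t1"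
    and s_range: "\<And>x. x \<in> space Dnc \<Longrightarrow> 0 \<le> s x \<and> s x \<le> 1"
  shows "ap Dc Dnc \<alpha> s
    = (LBINT b:{0..1}. b / (b + \<alpha> * measure Dnc {y \<in> space Dnc. recall Dc s (s y) < b}))"
  unfolding ap_def
proof (intro set_lebesgue_integral_cong allI impI)
  fix b :: real assume b: "b \<in> {0..1}"
  define u where "u = the_inv_into {0..1} (recall Dc s) b"
  have u: "u \<in> {0..1}" "recall Dc s u = b"
    using b bij_betwE[OF bij_betw_the_inv_into[OF bij]] f_the_inv_into_f_bij_betw[OF bij]
    unfolding u_def by auto
  have "u < s y \<longleftrightarrow> recall Dc s (s y) < b" if "y \<in> space Dnc" for y
    using strict[of u "s y"] strict[of "s y" u] s_range[OF that] u
    by (cases "u < s y"; cases "s y = u") auto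
  then show "b / (b + \<alpha> * measure Dnc {x' \<in> space Dnc. the_inv_into {0..1} (recall Dc s) b < s x'})
      = b / (b + \<alpha> * measure Dnc {y \<in> space Dnc. recall Dc s (s y) < b})"
    unfolding u_def[symmetric] by (metis (no_types, lifting) Collect_cong)
qed simp

theorem theorem2:
  fixes Dc Dnc :: "'a measure" and s :: "'a \<Rightarrow> real" and Pc Pnc \<alpha> :: real
  assumes "prob_space Dc" and "prob_space Dnc"
    and "sets Dnc = sets Dc"
    and "s \<in> borel_measurable Dc"
    and "\<And>x. x \<in> space Dc \<Longrightarrow> 0 \<le> s x \<and> s x \<le> 1"
    and "Pc > 0" and "Pnc > 0" and "Pc + Pnc = 1"
    and "\<alpha> = Pnc / Pc"
    and "bij_betw (recall Dc s) {0..1} {0..1}"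
    and "\<And>t1 t2. 0 \<le> t1 \<Longrightarrow> t1 < t2 \<Longrightarrow> t2 \<le> 1 \<Longrightarrow> recall Dc s t2 < recall Dc s t1"
  shows "\<alpha> * ln ((1 + \<alpha>) / (1 + \<alpha> - ranking_error Dc Dnc s)) \<le> det_error Dc Dnc \<alpha> s
       \<and> det_error Dc Dnc \<alpha> s \<le>
           min (sqrt (2/3 * \<alpha> * ranking_error Dc Dnc s))
               (1 - 8/9 * (1 / (1 + 2 * \<alpha> * ranking_error Dc Dnc s)))"
proof -
  define Q where "Q b = measure Dnc {y \<in> space Dnc. recall Dc s (s y) < b}" for b
  have "space Dnc = space Dc"
    using assms(3) by (rule sets_eq_imp_space_eq)
  have [measurable]: "s \<in> borel_measurable Dnc"
    using assms(4) unfolding measurable_cong_sets[OF assms(3) refl] .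
  have [measurable]: "recall Dc s \<in> borel_measurable borel"
    using assms(1,4) by (rule borel_measurable_recall)
  have recall_onto: "{0..1} \<subseteq> range (recall Dc s)"
    using assms(10) by (auto simp: bij_betw_def)
  have Q_measurable: "Q \<in> borel_measurable borel"
    unfolding Q_def using assms(2) by (rule borel_measurable_prob_less) measurable
  have Q_range: "0 \<le> Q b \<and> Q b \<le> 1" for b
    unfolding Q_def by (simp add: prob_space.prob_le_1[OF assms(2)])
  have "ranking_error Dc Dnc s = (LBINT b:{0..1}. Q b)"
    unfolding ranking_error_eq_integral[OF assms(1-4) recall_onto] Q_def
    using assms(2) recall_range[OF assms(1)] by (intro set_integral_prob_less_eq_integral[symmetric]) auto
  moreover have "ap Dc Dnc \<alpha> s = (LBINT b:{0..1}. b / (b + \<alpha> * Q b))"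
    unfolding Q_def using assms(5,10,11) \<open>space Dnc = space Dc\<close>
    by (intro ap_eq_set_integral_recall_less) auto
  moreover have "\<alpha> > 0"
    \<comment> \<open>only the positivity of the priors is needed, not Pc + Pnc = 1\<close>
    using assms(6,7,9) by simp
  ultimately show ?thesis
    unfolding det_error_def
    using ln_bound_le_imprecision imprecision_le_sqrt_bound imprecision_le_reciprocal_bound
      Q_measurable Q_range by simp
qed

end
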